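(* Let $\mathbf{u}$ be fixed by a primitive substitution $\varphi_w$, $w\in\{a,b,\alpha,\beta\}^*$. (1) If $w\in\{a,\beta\}^*$, then $\sigma(\mathbf{u})$ is a standard Sturmian word which is fixed by the substitution $\varphi_{H(w)}$. (2) If $w\in\{b,\alpha\}^*$, then $\sigma(\mathbf{u})$ is a standard Sturmian word which is fixed by the substitution $\varphi_{F(w)}$. (3) If $w\in\{a,\alpha\}^*$ and $\mathbf{u}$ has prefix $1$, then $\sigma(\mathbf{u})$ is fixed by the substitution $\varphi_{H(w)}$. (4) If $w\in\{a,\alpha\}^*$ and $\mathbf{u}$ has prefix $0$, then $\sigma(\mathbf{u})$ is fixed by the substitution $\varphi_{F(w)}$.
   Context: Morphisms on $\{0,1\}^*$: $\varphi_a: 0\mapsto 0, 1 \mapsto 10$; $\varphi_b: 0 \mapsto 0, 1\mapsto 01$; $\varphi_\alpha: 0\mapsto 01, 1\mapsto 1$; $\varphi_\beta: 0\mapsto 10, 1 \mapsto 1$; for $w=w_0\cdots w_{m-1}$, $\varphi_w = \varphi_{w_0}\circ\cdots\circ\varphi_{w_{m-1}}$. $H, F$ are the monoid morphisms on $\{a,b,\alpha,\beta\}^*$ given by $H(a)=H(b)=b$, $H(\alpha)=\alpha$, $H(\beta)=\beta$, and $F(a)=a$, $F(b)=b$, $F(\alpha)=F(\beta)=\beta$. $\sigma$ is the shift $\sigma(u_0u_1u_2\cdots)=u_1u_2\cdots$. A morphism is primitive if some power maps every letter to a word containing every letter; a substitution is a morphism $\psi$ with a letter $c$, $\psi(c)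 = cx$, $x$ nonempty, $|\psi^n(c)|\to\infty$. A standard Sturmian word is a Sturmian word $\mathbf{s}$ over $\{0,1\}$ such that both $0\mathbf{s}$ and $1\mathbf{s}$ are Sturmian (equivalently, the lower two interval exchange coding with parameters $\ell_0,\ell_1,\rho=\ell_1$: $T$ on $[0,\ell_0+\ell_1)$, $T(x)=x+\ell_1$ on $[0,\ell_0)$ coded $0$, $T(x)=x-\ell_0$ on $[\ell_0,\ell_0+\ell_1)$ coded $1$, orbit of $\rho$). Sturmian words are infinite binary words with exactly $n+1$ factors of length $n$ for each $n$. *)

theory Defs
  imports Main
begin

datatype bin = B0 | B1
datatype gen = Ga | Gb | Galpha | Gbeta

definition ext :: "('x \<Rightarrow> 'y list) \<Rightarrow> 'x list \<Rightarrow> 'y list" where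
  "ext f xs = concat (map f xs)"

fun phi :: "gen \<Rightarrow> bin \<Rightarrow> bin list" where
  "phi Ga B0 = [B0]" | "phi Ga B1 = [B1, B0]"
| "phi Gb B0 = [B0]" | "phi Gb B1 = [B0, B1]"
| "phi Galpha B0 = [B0, B1]" | "phi Galpha B1 = [B1]"
| "phi Gbeta B0 = [B1, B0]" | "phi Gbeta B1 = [B1]"

fun phiw :: "gen list \<Rightarrow> bin \<Rightarrow> bin list" where
  "phiw [] c = [c]"
| "phiw (g # w) c = ext (phi g) (phiw w c)"

fun H :: "gen \<Rightarrow> gen" where
  "H Ga = Gb" | "H Gb = Gb" | "H Galpha = Galpha" | "H Gbeta = Gbeta"

fun F :: "gen \<Rightarrow> gen" where
  "F Ga = Ga" | "F Gb = Gb" | "F Galpha = Gbeta" | "F Gbeta = Gbeta"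

definition primitive :: "('x \<Rightarrow> 'x list) \<Rightarrow> bool" where
  "primitive f \<longleftrightarrow> (\<exists>k. \<forall>c d. d \<in> set ((ext f ^^ k) [c]))"

definition substitution :: "('x \<Rightarrow> 'x list) \<Rightarrow> bool" where
  "substitution f \<longleftrightarrow> (\<exists>c x. f c = c # x \<and> x \<noteq> [] \<and>
      filterlim (\<lambda>n. length ((ext f ^^ n) [c])) at_top sequentially)"

definition pref :: "(nat \<Rightarrow> 'x) \<Rightarrow> nat \<Rightarrow> 'x list" where
  "pref u n = map u [0..<n]"

text \<open>Image of an infinite word under a non-erasing morphism (all morphisms used here
  are non-erasing): the k-th letter of f(u) is the k-th letter of f(u_0 ... u_k).\<close>
definition inf_img :: "('x \<Rightarrow> 'x list) \<Rightarrow> (nat \<Rightarrow> 'x) \<Rightarrow> nat \<Rightarrow> 'x" where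
  "inf_img f u k = ext f (pref u (Suc k)) ! k"

definition fixed_by :: "('x \<Rightarrow> 'x list) \<Rightarrow> (nat \<Rightarrow> 'x) \<Rightarrow> bool" where
  "fixed_by f u \<longleftrightarrow> inf_img f u = u"

definition shift :: "(nat \<Rightarrow> 'x) \<Rightarrow> nat \<Rightarrow> 'x" where
  "shift u n = u (Suc n)"

definition factors :: "(nat \<Rightarrow> 'x) \<Rightarrow> nat \<Rightarrow> 'x list set" where
  "factors u n = {map (\<lambda>i. u (i + k)) [0..<n] | k. True}"

definition sturmian :: "(nat \<Rightarrow> bin) \<Rightarrow> bool" where
  "sturmian u \<longleftrightarrow> (\<forall>n. card (factors u n) = n + 1)"

definition cons_inf :: "'x \<Rightarrow> (nat \<Rightarrow> 'x) \<Rightarrow> nat \<Rightarrow> 'x" where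
  "cons_inf c u n = (case n of 0 \<Rightarrow> c | Suc m \<Rightarrow> u m)"

definition standard_sturmian :: "(nat \<Rightarrow> bin) \<Rightarrow> bool" where
  "standard_sturmian s \<longleftrightarrow> sturmian s \<and> sturmian (cons_inf B0 s) \<and> sturmian (cons_inf B1 s)"

end

(*
  From phi_a(1l) = 1 phi_b(l) 0 and phi_alpha(0l) = 0 phi_beta(l) 1, and since phi_alpha,
  phi_beta keep a leading 1 and phi_a, phi_b a leading 0, the image of 1l under phi_g begins
  with 1 phi_H(g)(l) for g /= b, and that of 0l with 0 phi_F(g)(l) for g /= beta.  Composing,
  deleting the first letter of a fixed point of phi_w gives a fixed point of phi_H(w) or
  phi_F(w).  Primitivity means that every letter is moved by some generator; this makes
  these compositions substitutions and, in cases (1) and (2), fixes the first letter of u.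

  In cases (1) and (2) the new word lies in {b, beta}*, and a fixed point x of such a
  primitive composition is phi_b(y) or phi_beta(y) with y a fixed point of a rotated
  composition.  Occurrences of 1w and 0w in phi_b(y) come from occurrences of 1w' and 0w'
  in y with w' shorter, and phi_beta is phi_b conjugated by the letter exchange.  By
  induction on length, the left special factors of x are exactly its prefixes.  Hence x has
  n + 1 factors of length n, and prepending a letter creates no new factor: x is standard
  Sturmian.
*)
theory Submission
  imports Defs "HOL-Library.Sublist"
begin

section \<open>Morphisms of finite and infinite words\<close>

lemma ext_Nil [simp]: "ext f [] = []"
  by (simp add: ext_def)

lemma ext_Cons [simp]: "ext f (c # l) = f c @ ext f l"
  by (simp add: ext_def)

lemma ext_append [simp]: "ext f (l @ l') = ext f l @ ext f l'"
  by (simp add: ext_def)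

lemma ext_ext: "ext f (ext g l) = ext (\<lambda>c. ext f (g c)) l"
  by (induction l) auto

lemma length_ext_ge:
  assumes "[] \<notin> range f"
  shows "length l \<le> length (ext f l)"
proof (induction l)
  case (Cons c l)
  have "f c \<noteq> []" using assms by (metis rangeI)
  with Cons show ?case by (cases "f c") auto
qed simp

lemma prefix_ext: "prefix l l' \<Longrightarrow> prefix (ext f l) (ext f l')"
  by (auto elim!: prefixE)

lemma funpow_ext_append:
  fixes f :: "'x \<Rightarrow> 'x list"
  shows "(ext f ^^ n) (l @ l') = (ext f ^^ n) l @ (ext f ^^ n) l'"
  by (induction n) auto

lemma length_funpow_ext_ge:
  fixes f :: "'x \<Rightarrow> 'x list"
  assumes "[] \<notin> range f"
  shows "length l \<le> length ((ext f ^^ n) l)"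
  by (induction n) (auto intro: order_trans[OF _ length_ext_ge[OF assms]])

lemma phi_nonempty [simp]: "phi g c \<noteq> []"
  by (cases g; cases c) simp_all

lemma phiw_nonempty [simp]: "phiw v c \<noteq> []"
  by (induction v arbitrary: c) (auto simp: ext_def)

lemma nonerasing_phi [simp]: "[] \<notin> range (phi g)"
  by (metis phi_nonempty rangeE)

lemma nonerasing_phiw [simp]: "[] \<notin> range (phiw v)"
  by (metis phiw_nonempty rangeE)

lemma ext_phiw_Nil [simp]: "ext (phiw []) l = l"
  by (induction l) auto

lemma ext_phiw_Cons: "ext (phiw (g # v)) l = ext (phi g) (ext (phiw v) l)"
  by (induction l) auto

lemma phiw_append: "phiw (v @ v') c = ext (phiw v) (phiw v' c)"
  by (induction v arbitrary: c) (simp_all add: ext_phiw_Cons)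

definition prefix_inf :: "'x list \<Rightarrow> (nat \<Rightarrow> 'x) \<Rightarrow> bool" where
  "prefix_inf w x \<longleftrightarrow> (\<forall>i<length w. x i = w ! i)"

definition drop_inf :: "nat \<Rightarrow> (nat \<Rightarrow> 'x) \<Rightarrow> nat \<Rightarrow> 'x" where
  "drop_inf k x i = x (k + i)"

definition factor_inf :: "'x list \<Rightarrow> (nat \<Rightarrow> 'x) \<Rightarrow> bool" where
  "factor_inf w x \<longleftrightarrow> (\<exists>k. prefix_inf w (drop_inf k x))"

lemma drop_inf_0 [simp]: "drop_inf 0 x = x"
  by (simp add: drop_inf_def fun_eq_iff)

lemma drop_inf_drop_inf [simp]: "drop_inf k (drop_inf l x) = drop_inf (l + k) x"
  by (simp add: drop_inf_def fun_eq_iff add.assoc)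

lemma shift_eq_drop_inf: "shift u = drop_inf 1 u"
  by (simp add: shift_def drop_inf_def fun_eq_iff)

lemma length_pref [simp]: "length (pref x n) = n"
  by (simp add: pref_def)

lemma nth_pref [simp]: "i < n \<Longrightarrow> pref x n ! i = x i"
  by (simp add: pref_def)

lemma pref_0 [simp]: "pref x 0 = []"
  by (simp add: pref_def)

lemma pref_Suc: "pref x (Suc n) = pref x n @ [x n]"
  by (simp add: pref_def)

lemma pref_add: "pref x (k + n) = pref x k @ pref (drop_inf k x) n"
  by (induction n) (simp_all add: pref_Suc drop_inf_def)

lemma pref_Suc_shift: "pref x (Suc n) = x 0 # pref (shift x) n"
  using pref_add[of x 1 n] by (simp add: shift_eq_drop_inf pref_Suc)

lemma prefix_inf_iff_pref: "prefix_inf w x \<longleftrightarrow> pref x (length w) = w"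
  by (auto simp: prefix_inf_def intro: nth_equalityI) (metis nth_pref)

lemma prefix_inf_pref [simp]: "prefix_inf (pref x n) x"
  by (simp add: prefix_inf_iff_pref)

lemma prefix_inf_prefix: "prefix v w \<Longrightarrow> prefix_inf w x \<Longrightarrow> prefix_inf v x"
  by (auto simp: prefix_inf_def nth_append elim!: prefixE)

lemma prefix_inf_append:
  "prefix_inf (v @ w) x \<longleftrightarrow> prefix_inf v x \<and> prefix_inf w (drop_inf (length v) x)"
  by (auto simp: prefix_inf_def drop_inf_def nth_append) (metis add_diff_inverse_nat nat_add_left_cancel_less)

lemma prefix_inf_Cons: "prefix_inf (c # w) x \<longleftrightarrow> x 0 = c \<and> prefix_inf w (drop_inf 1 x)"
  using prefix_inf_append[of "[c]" w x] by (simp add: prefix_inf_def)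

lemma prefix_pref: "m \<le> n \<Longrightarrow> prefix (pref x m) (pref x n)"
  using pref_add[of x m "n - m"] by simp

lemma prefix_if_prefix_inf:
  "prefix_inf v x \<Longrightarrow> prefix_inf w x \<Longrightarrow> length v \<le> length w \<Longrightarrow> prefix v w"
  by (metis prefix_inf_iff_pref prefix_pref)

lemma factor_inf_prefix: "factor_inf w x \<Longrightarrow> prefix v w \<Longrightarrow> factor_inf v x"
  unfolding factor_inf_def using prefix_inf_prefix by blast

lemma factor_inf_appendD: "factor_inf (v @ w) x \<Longrightarrow> factor_inf w x"
  unfolding factor_inf_def prefix_inf_append by auto

lemma factor_inf_snoc: "factor_inf w x \<Longrightarrow> \<exists>d. factor_inf (w @ [d]) x"
  unfolding factor_inf_def prefix_inf_append by (auto simp: prefix_inf_def)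

lemma prefix_inf_inf_img:
  assumes "[] \<notin> range f"
  shows "prefix_inf (ext f (pref u n)) (inf_img f u)"
  unfolding prefix_inf_def
proof (intro allI impI)
  fix i
  assume i: "i < length (ext f (pref u n))"
  have long: "Suc i \<le> length (ext f (pref u (Suc i)))"
    using length_ext_ge[OF assms, of "pref u (Suc i)"] by simp
  show "inf_img f u i = ext f (pref u n) ! i"
  proof (cases "Suc i \<le> n")
    case True
    then show ?thesis
      using long pref_add[of u "Suc i" "n - Suc i"] by (simp add: inf_img_def nth_append)
  next
    case False
    then show ?thesis
      using i pref_add[of u n "Suc i - n"] by (simp add: inf_img_def nth_append)
  qed
qed

lemma prefix_inf_inf_imgD:
  assumes "[] \<notin> range f" and "prefix_inf w (inf_img f u)"
  shows "prefix w (ext f (pref u (length w)))"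
  using assms prefix_inf_inf_img[OF assms(1)] length_ext_ge[OF assms(1), of "pref u (length w)"]
  by (auto intro: prefix_if_prefix_inf)

lemma inf_img_eqI:
  assumes "[] \<notin> range f" and "\<And>n. prefix_inf (ext f (pref u n)) V"
  shows "inf_img f u = V"
proof
  fix i
  have "Suc i \<le> length (ext f (pref u (Suc i)))"
    using length_ext_ge[OF assms(1), of "pref u (Suc i)"] by simp
  then show "inf_img f u i = V i"
    using assms(2)[of "Suc i"] by (simp add: prefix_inf_def inf_img_def)
qed

lemma inf_img_comp:
  assumes "[] \<notin> range f" and "[] \<notin> range g"
  shows "inf_img (\<lambda>c. ext f (g c)) u = inf_img f (inf_img g u)"
proof (rule inf_img_eqI)
  show "[] \<notin> range (\<lambda>c. ext f (g c))"
  proof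
    assume "[] \<in> range (\<lambda>c. ext f (g c))"
    then obtain c where "ext f (g c) = []" by (metis rangeE)
    moreover have "length (g c) \<le> length (ext f (g c))" by (rule length_ext_ge[OF assms(1)])
    ultimately show False using assms(2) by (metis le_zero_eq length_0_conv rangeI)
  qed
  fix n
  have "pref (inf_img g u) (length (ext g (pref u n))) = ext g (pref u n)"
    using prefix_inf_inf_img[OF assms(2)] by (simp add: prefix_inf_iff_pref)
  then show "prefix_inf (ext (\<lambda>c. ext f (g c)) (pref u n)) (inf_img f (inf_img g u))"
    using prefix_inf_inf_img[OF assms(1), of "inf_img g u"] by (metis ext_ext)
qed

lemma drop_inf_inf_img:
  assumes "[] \<notin> range f"
  shows "drop_inf (length (ext f (pref u k))) (inf_img f u) = inf_img f (drop_inf k u)"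
proof (rule inf_img_eqI[OF assms, symmetric])
  fix n
  show "prefix_inf (ext f (pref (drop_inf k u) n)) (drop_inf (length (ext f (pref u k))) (inf_img f u))"
    using prefix_inf_inf_img[OF assms, of u "k + n"] by (simp add: pref_add prefix_inf_append)
qed

lemma factor_inf_inf_img:
  assumes "[] \<notin> range f" and "factor_inf v y"
  shows "factor_inf (ext f v) (inf_img f y)"
proof -
  obtain k where "prefix_inf v (drop_inf k y)"
    using assms(2) unfolding factor_inf_def by blast
  then have "prefix_inf (ext f v) (inf_img f (drop_inf k y))"
    using prefix_inf_inf_img[OF assms(1)] by (metis prefix_inf_iff_pref)
  then show ?thesis
    unfolding factor_inf_def drop_inf_inf_img[OF assms(1), symmetric] by blast
qed

lemma inf_img_block:
  assumes "[] \<notin> range f" and "i < length (f (u k))"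
  shows "inf_img f u (length (ext f (pref u k)) + i) = f (u k) ! i"
proof -
  have "prefix_inf (f (u k)) (inf_img f (drop_inf k u))"
    using prefix_inf_inf_img[OF assms(1), of "drop_inf k u" 1] by (simp add: pref_def drop_inf_def)
  then show ?thesis
    using assms(2) drop_inf_inf_img[OF assms(1), of u k]
    by (simp add: prefix_inf_def drop_inf_def fun_eq_iff)
qed

lemma ex_block_containing:
  assumes "[] \<notin> range f"
  shows "\<exists>k. length (ext f (pref u k)) \<le> i \<and> i < length (ext f (pref u (Suc k)))"
proof (induction i)
  case 0
  have "f (u 0) \<noteq> []" using assms by (metis rangeI)
  then show ?case by (intro exI[of _ 0]) (simp add: pref_def)
next
  case (Suc i)
  then obtain k where "length (ext f (pref u k)) \<le> i" "i < length (ext f (pref u (Suc k)))"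
    by blast
  moreover have "length (ext f (pref u (Suc k))) < length (ext f (pref u (Suc (Suc k))))"
    using assms by (simp add: pref_Suc) (metis length_greater_0_conv rangeI)
  ultimately show ?case
    by (cases "Suc i = length (ext f (pref u (Suc k)))") (auto intro: exI[of _ "Suc k"] exI[of _ k])
qed

lemma fixed_by_hd:
  assumes "fixed_by f u" and "f (u 0) \<noteq> []"
  shows "hd (f (u 0)) = u 0"
proof -
  have "u 0 = inf_img f u 0"
    using assms(1) by (simp add: fixed_by_def)
  also have "\<dots> = hd (f (u 0))"
    using assms(2) by (simp add: inf_img_def pref_def hd_conv_nth nth_append)
  finally show ?thesis by simp
qed

section \<open>Primitivity and substitutions\<close>

definition moves_all_letters :: "gen list \<Rightarrow> bool" where
  "moves_all_letters v \<longleftrightarrow> (\<forall>d. \<exists>g\<in>set v. phi g d \<noteq> [d])"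

lemma phiw_eq_singleton: "\<forall>g\<in>set v. phi g d = [d] \<Longrightarrow> phiw v d = [d]"
  by (induction v) auto

lemma primitive_moves_all_letters:
  assumes "primitive (phiw v)"
  shows "moves_all_letters v"
proof (rule ccontr)
  assume "\<not> moves_all_letters v"
  then obtain d where "phiw v d = [d]"
    unfolding moves_all_letters_def using phiw_eq_singleton by blast
  then have "(ext (phiw v) ^^ k) [d] = [d]" for k
    by (induction k) auto
  moreover obtain e where "e \<noteq> d"
    by (metis bin.distinct(1))
  ultimately show False
    using assms unfolding primitive_def by (metis empty_iff list.set(1) set_ConsD)
qed

lemma moves_all_letters_map_H: "moves_all_letters (map H v) \<longleftrightarrow> moves_all_letters v"
proof -
  have "phi (H g) d = [d] \<longleftrightarrow> phi g d = [d]" for g d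
    by (cases g; cases d) simp_all
  then show ?thesis unfolding moves_all_letters_def by auto
qed

lemma moves_all_letters_map_F: "moves_all_letters (map F v) \<longleftrightarrow> moves_all_letters v"
proof -
  have "phi (F g) d = [d] \<longleftrightarrow> phi g d = [d]" for g d
    by (cases g; cases d) simp_all
  then show ?thesis unfolding moves_all_letters_def by auto
qed

lemma set_phiw_UNIV:
  assumes "\<exists>g\<in>set v. phi g d \<noteq> [d]"
  shows "set (phiw v d) = UNIV"
  using assms
proof (induction v)
  case (Cons g v)
  have letter_kept: "c \<in> set (phi g c)" for c
    by (cases g; cases c) simp_all
  show ?case
  proof (cases "\<exists>g\<in>set v. phi g d \<noteq> [d]")
    case True
    then show ?thesis
      using Cons.IH letter_kept by (auto simp: ext_def)
  next
    case False
    then have "phiw (g # v) d = phi g d" and "phi g d \<noteq> [d]"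
      using Cons.prems phiw_eq_singleton by auto
    moreover have "set (phi g d) = UNIV" if "phi g d \<noteq> [d]"
      using that by (cases g; cases d) (auto intro: bin.exhaust)
    ultimately show ?thesis by simp
  qed
qed simp

lemma length_funpow_ext_gt:
  fixes f :: "'x \<Rightarrow> 'x list"
  assumes "[] \<notin> range f" and "f c = c # r" and "r \<noteq> []"
  shows "n < length ((ext f ^^ n) [c])"
proof (induction n)
  case (Suc n)
  have "(ext f ^^ Suc n) [c] = (ext f ^^ n) ([c] @ r)"
    using assms(2) by (simp add: funpow_Suc_right del: funpow.simps)
  also have "\<dots> = (ext f ^^ n) [c] @ (ext f ^^ n) r"
    by (rule funpow_ext_append)
  finally show ?case
    using Suc length_funpow_ext_ge[OF assms(1), of r n] assms(3) by (cases r) auto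
qed simp

lemma substitution_phiw:
  assumes "moves_all_letters v" and "fixed_by (phiw v) u"
  shows "substitution (phiw v)"
proof -
  obtain r where r: "phiw v (u 0) = u 0 # r"
    using fixed_by_hd[OF assms(2)] by (metis list.collapse phiw_nonempty)
  obtain e where "e \<noteq> u 0"
    by (metis bin.distinct(1))
  moreover have "e \<in> set (phiw v (u 0))"
    using assms(1) set_phiw_UNIV unfolding moves_all_letters_def by blast
  ultimately have "r \<noteq> []"
    using r by auto
  have "filterlim (\<lambda>n. length ((ext (phiw v) ^^ n) [u 0])) at_top sequentially"
    using length_funpow_ext_gt[OF nonerasing_phiw r \<open>r \<noteq> []\<close>]
    by (intro filterlim_at_top_mono[OF filterlim_ident] always_eventually) (simp add: less_imp_le)
  with r \<open>r \<noteq> []\<close> show ?thesis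
    unfolding substitution_def by blast
qed

section \<open>Deleting the first letter of a fixed point\<close>

lemma fixed_by_shift:
  assumes "[] \<notin> range f" and "[] \<notin> range f'"
    and "\<And>l. prefix (u 0 # ext f' l) (ext f (u 0 # l))" and "fixed_by f u"
  shows "fixed_by f' (shift u)"
  unfolding fixed_by_def
proof (rule inf_img_eqI[OF assms(2)])
  fix n
  have "prefix_inf (ext f (pref u (Suc n))) u"
    using prefix_inf_inf_img[OF assms(1)] assms(4) by (metis fixed_by_def)
  then have "prefix_inf (u 0 # ext f' (pref (shift u) n)) u"
    using assms(3) prefix_inf_prefix by (metis pref_Suc_shift)
  then show "prefix_inf (ext f' (pref (shift u) n)) (shift u)"
    by (simp add: prefix_inf_Cons shift_eq_drop_inf)
qed

lemma prefix_ext_phiw_Cons: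
  assumes "\<And>g l. g \<in> set v \<Longrightarrow> prefix (c # ext (phi (G g)) l) (ext (phi g) (c # l))"
  shows "prefix (c # ext (phiw (map G v)) l) (ext (phiw v) (c # l))"
  using assms
proof (induction v arbitrary: l)
  case (Cons g v)
  let ?l' = "ext (phiw (map G v)) l"
  have "prefix (c # ext (phi (G g)) ?l') (ext (phi g) (c # ?l'))"
    using Cons.prems by simp
  moreover have "prefix (ext (phi g) (c # ?l')) (ext (phi g) (ext (phiw v) (c # l)))"
    using Cons by (intro prefix_ext) simp
  ultimately show ?case
    unfolding list.map ext_phiw_Cons by (rule prefix_order.trans)
qed simp

lemma phi_a_conjugate: "B0 # ext (phi Ga) l = ext (phi Gb) l @ [B0]"
proof (induction l)
  case (Cons c l)
  then show ?case by (cases c) auto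
qed simp

lemma phi_alpha_conjugate: "B1 # ext (phi Galpha) l = ext (phi Gbeta) l @ [B1]"
proof (induction l)
  case (Cons c l)
  then show ?case by (cases c) auto
qed simp

lemma prefix_ext_phi_B1_H: "g \<noteq> Gb \<Longrightarrow> prefix (B1 # ext (phi (H g)) l) (ext (phi g) (B1 # l))"
  by (cases g) (simp_all add: phi_a_conjugate)

lemma prefix_ext_phi_B0_F: "g \<noteq> Gbeta \<Longrightarrow> prefix (B0 # ext (phi (F g)) l) (ext (phi g) (B0 # l))"
  by (cases g) (simp_all add: phi_alpha_conjugate)

lemma fixed_by_shift_H:
  assumes "Gb \<notin> set w" and "u 0 = B1" and "fixed_by (phiw w) u"
  shows "fixed_by (phiw (map H w)) (shift u)"
proof (rule fixed_by_shift[OF nonerasing_phiw nonerasing_phiw _ assms(3)])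
  fix l
  show "prefix (u 0 # ext (phiw (map H w)) l) (ext (phiw w) (u 0 # l))"
    unfolding assms(2) by (intro prefix_ext_phiw_Cons prefix_ext_phi_B1_H) (use assms(1) in auto)
qed

lemma fixed_by_shift_F:
  assumes "Gbeta \<notin> set w" and "u 0 = B0" and "fixed_by (phiw w) u"
  shows "fixed_by (phiw (map F w)) (shift u)"
proof (rule fixed_by_shift[OF nonerasing_phiw nonerasing_phiw _ assms(3)])
  fix l
  show "prefix (u 0 # ext (phiw (map F w)) l) (ext (phiw w) (u 0 # l))"
    unfolding assms(2) by (intro prefix_ext_phiw_Cons prefix_ext_phi_B0_F) (use assms(1) in auto)
qed

lemma hd_ext_phi: "l \<noteq> [] \<Longrightarrow> hd (ext (phi g) l) = hd (phi g (hd l))"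
  by (cases l) auto

lemma hd_phiw_a_beta:
  assumes "moves_all_letters v" and "set v \<subseteq> {Ga, Gbeta}"
  shows "hd (phiw v d) = B1"
proof -
  obtain g where "g \<in> set v" and "phi g B0 \<noteq> [B0]"
    using assms(1) unfolding moves_all_letters_def by blast
  then have "Gbeta \<in> set v"
    using assms(2) by (cases g) auto
  with assms(2) show ?thesis
  proof (induction v)
    case (Cons g v)
    then show ?case
      by (cases "Gbeta \<in> set v"; cases "hd (phiw v d)") (auto simp: hd_ext_phi)
  qed simp
qed

lemma hd_phiw_b_alpha:
  assumes "moves_all_letters v" and "set v \<subseteq> {Gb, Galpha}"
  shows "hd (phiw v d) = B0"
proof -
  obtain g where "g \<in> set v" and "phi g B1 \<noteq> [B1]"
    using assms(1) unfolding moves_all_letters_def by blast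
  then have "Gb \<in> set v"
    using assms(2) by (cases g) auto
  with assms(2) show ?thesis
  proof (induction v)
    case (Cons g v)
    then show ?case
      by (cases "Gb \<in> set v"; cases "hd (phiw v d)") (auto simp: hd_ext_phi)
  qed simp
qed

section \<open>Left special factors and standard Sturmian words\<close>

definition left_special :: "bin list \<Rightarrow> (nat \<Rightarrow> bin) \<Rightarrow> bool" where
  "left_special w x \<longleftrightarrow> factor_inf (B0 # w) x \<and> factor_inf (B1 # w) x"

lemma factors_eq: "factors x n = {w. length w = n \<and> factor_inf w x}"
proof -
  have "map (\<lambda>i. x (i + k)) [0..<n] = pref (drop_inf k x) n" for k
    by (simp add: pref_def drop_inf_def add.commute)
  then show ?thesis
    unfolding factors_def factor_inf_def prefix_inf_iff_pref by auto metis
qed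

lemma finite_bin_lists_length: "finite {w :: bin list. length w = n \<and> P w}"
proof (rule finite_subset)
  show "finite {w. set w \<subseteq> {B0, B1} \<and> length w = n}"
    by (rule finite_lists_length_eq) simp
  show "{w. length w = n \<and> P w} \<subseteq> {w. set w \<subseteq> {B0, B1} \<and> length w = n}"
    by (auto intro: bin.exhaust)
qed

lemma factor_inf_extend_left:
  "factor_inf w x \<Longrightarrow> prefix_inf w x \<or> (\<exists>c. factor_inf (c # w) x)"
proof -
  assume "factor_inf w x"
  then obtain k where k: "prefix_inf w (drop_inf k x)"
    unfolding factor_inf_def by blast
  show ?thesis
  proof (cases k)
    case (Suc k')
    then have "prefix_inf (x k' # w) (drop_inf k' x)"
      using k by (simp add: prefix_inf_Cons drop_inf_def)
    then show ?thesis
      unfolding factor_inf_def by blast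
  qed (use k in simp)
qed

lemma card_factors_Suc:
  assumes pref_special: "left_special (pref x n) x"
    and special_pref: "\<And>w. length w = n \<Longrightarrow> left_special w x \<Longrightarrow> w = pref x n"
  shows "card (factors x (Suc n)) = Suc (card (factors x n))"
proof -
  define A where "A c = {w. length w = n \<and> factor_inf (c # w) x}" for c
  have fin: "finite (A c)" for c
    unfolding A_def by (rule finite_bin_lists_length)
  have split: "factors x (Suc n) = Cons B0 ` A B0 \<union> Cons B1 ` A B1"
    unfolding factors_eq A_def
    by (auto simp: length_Suc_conv intro: bin.exhaust)
  have "card (factors x (Suc n)) = card (A B0) + card (A B1)"
    unfolding split by (subst card_Un_disjoint) (auto simp: fin card_image)
  also have "\<dots> = card (A B0 \<union> A B1) + card (A B0 \<inter> A B1)"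
    by (rule card_Un_Int) (simp_all add: fin)
  also have "A B0 \<union> A B1 = factors x n"
  proof
    show "A B0 \<union> A B1 \<subseteq> factors x n"
      unfolding A_def factors_eq using factor_inf_appendD[of "[_]"] by auto
    show "factors x n \<subseteq> A B0 \<union> A B1"
    proof
      fix w
      assume "w \<in> factors x n"
      then have "length w = n" and "prefix_inf w x \<or> (\<exists>c. factor_inf (c # w) x)"
        unfolding factors_eq using factor_inf_extend_left by auto
      then show "w \<in> A B0 \<union> A B1"
        using pref_special unfolding A_def left_special_def prefix_inf_iff_pref
        by auto (metis bin.exhaust)
    qed
  qed
  also have "A B0 \<inter> A B1 = {pref x n}"
    using pref_special special_pref unfolding A_def left_special_def by auto
  finally show ?thesis
    by simp
qed

lemma factor_inf_cons_inf:
  assumes "\<And>n. left_special (pref x n) x"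
  shows "factor_inf w (cons_inf c x) \<longleftrightarrow> factor_inf w x"
proof
  have drop_Suc: "drop_inf (Suc k) (cons_inf c x) = drop_inf k x" for k
    by (simp add: fun_eq_iff drop_inf_def cons_inf_def)
  have drop_1: "drop_inf 1 (cons_inf c x) = x"
    using drop_Suc[of 0] by simp
  show "factor_inf w (cons_inf c x)" if "factor_inf w x"
    using that drop_Suc unfolding factor_inf_def by metis
  assume "factor_inf w (cons_inf c x)"
  then obtain k where k: "prefix_inf w (drop_inf k (cons_inf c x))"
    unfolding factor_inf_def by blast
  show "factor_inf w x"
  proof (cases k)
    case 0
    show ?thesis
    proof (cases w)
      case Nil
      then show ?thesis by (auto simp: factor_inf_def prefix_inf_def)
    next
      case (Cons a w')
      then have "prefix_inf (a # w') (cons_inf c x)"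
        using k 0 by simp
      then have "cons_inf c x 0 = a" and "prefix_inf w' x"
        by (simp_all only: prefix_inf_Cons drop_1)
      then have "a = c" and "w' = pref x (length w')"
        by (simp_all add: cons_inf_def prefix_inf_iff_pref)
      then show ?thesis
        using assms[of "length w'"] Cons unfolding left_special_def by (cases c) auto
    qed
  next
    case (Suc k')
    then show ?thesis
      using k drop_Suc unfolding factor_inf_def by auto
  qed
qed

lemma standard_sturmianI:
  assumes "\<And>n. left_special (pref x n) x" and "\<And>w. left_special w x \<Longrightarrow> prefix_inf w x"
  shows "standard_sturmian x"
proof -
  have "card (factors x n) = n + 1" for n
  proof (induction n)
    case 0
    have "factors x 0 = {[]}"
      by (auto simp: factors_eq factor_inf_def prefix_inf_def)
    then show ?case by simp
  next
    case (Suc n)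
    then show ?case
      using card_factors_Suc assms by (metis Suc_eq_plus1 prefix_inf_iff_pref)
  qed
  moreover have "factors (cons_inf c x) = factors x" for c
    by (simp add: fun_eq_iff factors_eq factor_inf_cons_inf[OF assms(1)])
  ultimately show ?thesis
    unfolding standard_sturmian_def sturmian_def by simp
qed

section \<open>Desubstitution through \<open>\<phi>\<^sub>b\<close> and \<open>\<phi>\<^sub>\<beta>\<close>\<close>

fun exch :: "bin \<Rightarrow> bin" where
  "exch B0 = B1"
| "exch B1 = B0"

lemma exch_exch [simp]: "exch (exch c) = c"
  by (cases c) simp_all

lemma comp_exch_exch [simp]: "exch \<circ> exch = id"
  by (simp add: fun_eq_iff)

lemma pref_exch: "pref (exch \<circ> x) n = map exch (pref x n)"
  by (simp add: pref_def)

lemma prefix_inf_exch: "prefix_inf w (exch \<circ> x) \<longleftrightarrow> prefix_inf (map exch w) x"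
  unfolding prefix_inf_def by (metis (no_types, lifting) comp_apply exch_exch length_map nth_map)

lemma factor_inf_exch: "factor_inf w (exch \<circ> x) \<longleftrightarrow> factor_inf (map exch w) x"
proof -
  have "drop_inf k (exch \<circ> x) = exch \<circ> drop_inf k x" for k
    by (simp add: drop_inf_def fun_eq_iff)
  then show ?thesis
    unfolding factor_inf_def by (simp add: prefix_inf_exch)
qed

lemma left_special_exch: "left_special w (exch \<circ> x) \<longleftrightarrow> left_special (map exch w) x"
  unfolding left_special_def factor_inf_exch by auto

lemma exch_inf_img_phi_beta: "exch \<circ> inf_img (phi Gbeta) y = inf_img (phi Gb) (exch \<circ> y)"
proof (rule inf_img_eqI[symmetric, OF nonerasing_phi])
  fix n
  have "ext (phi Gb) (map exch l) = map exch (ext (phi Gbeta) l)" for l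
  proof (induction l)
    case (Cons c l)
    then show ?case by (cases c) simp_all
  qed simp
  then show "prefix_inf (ext (phi Gb) (pref (exch \<circ> y) n)) (exch \<circ> inf_img (phi Gbeta) y)"
    using prefix_inf_inf_img[OF nonerasing_phi] by (simp add: pref_exch prefix_inf_exch)
qed

text \<open>\<open>desubst_b w\<close> reads the blocks \<open>0\<close> and \<open>01\<close> of \<open>\<phi>\<^sub>b\<close> off \<open>w\<close>; a final
  lone \<open>0\<close> is dropped since it may begin either block. The last equation is junk:
  no \<open>\<phi>\<^sub>b\<close>-image starts with \<open>1\<close>.\<close>

fun desubst_b :: "bin list \<Rightarrow> bin list" where
  "desubst_b [] = []"
| "desubst_b [B0] = []"
| "desubst_b (B0 # B1 # r) = B1 # desubst_b r"
| "desubst_b (B0 # B0 # r) = B0 # desubst_b (B0 # r)"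
| "desubst_b (B1 # r) = desubst_b r"

lemma length_desubst_b_le: "length (desubst_b w) \<le> length w"
  by (induction w rule: desubst_b.induct) auto

lemma length_desubst_b_less: "w \<noteq> [] \<Longrightarrow> length (desubst_b w) < length w"
  by (induction w rule: desubst_b.induct) (auto simp: less_Suc_eq_le length_desubst_b_le)

lemma not_prefix_B1_ext_phi_b: "\<not> prefix (B1 # r) (ext (phi Gb) l)"
proof (cases l)
  case (Cons c l')
  then show ?thesis by (cases c) simp_all
qed simp

lemma prefix_desubst_b:
  "prefix w (ext (phi Gb) l) \<Longrightarrow>
    prefix (desubst_b w) l \<and> prefix w (ext (phi Gb) (desubst_b w) @ [B0])"
proof (induction w arbitrary: l rule: desubst_b.induct)
  case (3 r)
  then obtain c l' where l: "l = c # l'"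
    by (cases l) auto
  have "c = B1"
    using "3.prems" not_prefix_B1_ext_phi_b[of r l'] l by (cases c) auto
  then show ?case
    using "3.IH"[of l'] "3.prems" l by simp
next
  case (4 r)
  then obtain c l' where l: "l = c # l'"
    by (cases l) auto
  have "c = B0"
    using "4.prems" l by (cases c) auto
  then show ?case
    using "4.IH"[of l'] "4.prems" l by simp
next
  case (5 r)
  then show ?case
    using not_prefix_B1_ext_phi_b by blast
qed auto

lemma phi_b_block_boundary:
  assumes x: "x = inf_img (phi Gb) y" and i: "x i = B1 \<or> x i = B0 \<and> x (Suc i) = B0"
  shows "\<exists>j. y j = x i \<and> Suc i = length (ext (phi Gb) (pref y (Suc j)))"
proof -
  obtain j where j: "length (ext (phi Gb) (pref y j)) \<le> i"
    "i < length (ext (phi Gb) (pref y (Suc j)))"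
    using ex_block_containing[OF nonerasing_phi] by blast
  define p where "p = length (ext (phi Gb) (pref y j))"
  have next_block: "length (ext (phi Gb) (pref y (Suc j))) = p + length (phi Gb (y j))"
    by (simp add: p_def pref_Suc)
  have block: "x (p + t) = phi Gb (y j) ! t" if "t < length (phi Gb (y j))" for t
    unfolding x p_def using inf_img_block[of "phi Gb" t y j] that by simp
  show ?thesis
  proof (cases "y j")
    case B0
    then have "i = p" using j next_block p_def by simp
    then show ?thesis using block[of 0] B0 next_block by (intro exI[of _ j]) simp
  next
    case B1
    then have "i = p \<or> i = Suc p" using j next_block p_def by auto
    moreover have "x p = B0" "x (Suc p) = B1"
      using block[of 0] block[of 1] B1 by simp_all
    ultimately show ?thesis using i B1 next_block by (intro exI[of _ j]) auto
  qed
qed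

lemma ext_phi_b_snoc_B0: "\<exists>r. ext (phi Gb) l @ [B0] = B0 # r"
proof (cases l)
  case (Cons c l')
  then show ?thesis by (cases c) auto
qed simp

text \<open>The letter \<open>c\<close> of such an occurrence of \<open>c w\<close> in \<open>\<phi>\<^sub>b(y)\<close> closes a block,
  so \<open>w\<close> is a prefix of the \<open>\<phi>\<^sub>b\<close>-image of a suffix of \<open>y\<close>.\<close>

lemma factor_inf_Cons_desubst_b:
  assumes x: "x = inf_img (phi Gb) y" and occ: "prefix_inf (c # w) (drop_inf i x)"
    and "w \<noteq> []" and c: "c = B1 \<or> w ! 0 = B0"
  shows "factor_inf (c # desubst_b w) y \<and> prefix w (ext (phi Gb) (desubst_b w) @ [B0])"
proof -
  have xi: "x i = c" and w: "prefix_inf w (drop_inf (Suc i) x)"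
    using occ by (simp_all add: prefix_inf_Cons drop_inf_def)
  have "x (Suc i) = w ! 0"
    using w \<open>w \<noteq> []\<close> unfolding prefix_inf_def drop_inf_def
    by (metis add.right_neutral add_Suc length_greater_0_conv)
  then obtain j where j: "y j = c" "Suc i = length (ext (phi Gb) (pref y (Suc j)))"
    using phi_b_block_boundary[OF x, of i] xi c by (cases c) auto
  let ?z = "drop_inf (Suc j) y"
  have "prefix_inf w (inf_img (phi Gb) ?z)"
    using w j(2) drop_inf_inf_img[of "phi Gb" y "Suc j"] x by simp
  then have "prefix w (ext (phi Gb) (pref ?z (length w)))"
    by (rule prefix_inf_inf_imgD[OF nonerasing_phi])
  then have "prefix (desubst_b w) (pref ?z (length w))"
    and P: "prefix w (ext (phi Gb) (desubst_b w) @ [B0])"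
    using prefix_desubst_b by blast+
  then have "prefix_inf (c # desubst_b w) (drop_inf j y)"
    using j(1) prefix_inf_prefix[OF _ prefix_inf_pref] by (simp add: prefix_inf_Cons drop_inf_def)
  then show ?thesis
    using P unfolding factor_inf_def by blast
qed

lemma left_special_desubst_b:
  assumes x: "x = inf_img (phi Gb) y" and "left_special w x" and "w \<noteq> []"
  shows "left_special (desubst_b w) y \<and> (prefix_inf (desubst_b w) y \<longrightarrow> prefix_inf w x)"
proof -
  note occurrence = factor_inf_Cons_desubst_b[OF x _ \<open>w \<noteq> []\<close>]
  obtain i1 where "prefix_inf (B1 # w) (drop_inf i1 x)"
    using assms(2) unfolding left_special_def factor_inf_def by blast
  with occurrence have B1: "factor_inf (B1 # desubst_b w) y"
    and P: "prefix w (ext (phi Gb) (desubst_b w) @ [B0])"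
    by blast+
  obtain r where "ext (phi Gb) (desubst_b w) @ [B0] = B0 # r"
    using ext_phi_b_snoc_B0 by blast
  then have "w ! 0 = B0"
    using P \<open>w \<noteq> []\<close> by (cases w) (simp_all only: nth_Cons_0 Cons_prefix_Cons)
  obtain i0 where "prefix_inf (B0 # w) (drop_inf i0 x)"
    using assms(2) unfolding left_special_def factor_inf_def by blast
  with occurrence \<open>w ! 0 = B0\<close> have B0: "factor_inf (B0 # desubst_b w) y"
    by blast
  have "prefix_inf w x" if "prefix_inf (desubst_b w) y"
  proof -
    let ?m = "length (desubst_b w)"
    have "prefix (ext (phi Gb) (desubst_b w) @ [B0]) (ext (phi Gb) (pref y (Suc ?m)))"
      using that by (cases "y ?m") (simp_all add: pref_Suc prefix_inf_iff_pref)
    then have "prefix w (ext (phi Gb) (pref y (Suc ?m)))"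
      using P prefix_order.trans by blast
    then show ?thesis
      using prefix_inf_prefix prefix_inf_inf_img[OF nonerasing_phi] x by blast
  qed
  with B0 B1 show ?thesis
    unfolding left_special_def by blast
qed

lemma left_special_pref_phi_b:
  assumes x: "x = inf_img (phi Gb) y" and "left_special (pref y n) y"
  shows "left_special (pref x (Suc n)) x"
proof -
  let ?P = "ext (phi Gb) (pref y n) @ [B0]"
  have "prefix ?P (ext (phi Gb) (pref y (Suc n)))"
    by (cases "y n") (simp_all add: pref_Suc)
  then have "prefix_inf ?P x"
    using prefix_inf_prefix prefix_inf_inf_img[OF nonerasing_phi] x by blast
  moreover have "Suc n \<le> length ?P"
    using length_ext_ge[of "phi Gb" "pref y n"] by simp
  ultimately have "prefix (pref x (Suc n)) ?P"
    by (intro prefix_if_prefix_inf) simp_all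
  moreover have "factor_inf (c # ?P) x" if special: "factor_inf (c # pref y n) y" for c
  proof -
    obtain d where "factor_inf (c # pref y n @ [d]) y"
      using factor_inf_snoc[OF special] by auto
    then have "factor_inf (ext (phi Gb) (c # pref y n @ [d])) x"
      unfolding x by (rule factor_inf_inf_img[OF nonerasing_phi])
    moreover obtain p q where "phi Gb c = p @ [c]" and "phi Gb d = B0 # q"
      by (cases c; cases d) auto
    ultimately have "factor_inf (p @ (c # ?P) @ q) x"
      by simp
    then show ?thesis
      using factor_inf_appendD factor_inf_prefix by (metis prefix_order.refl prefix_prefix)
  qed
  ultimately show ?thesis
    using assms(2) unfolding left_special_def by (meson Cons_prefix_Cons factor_inf_prefix)
qed

lemma left_special_desubst:
  assumes "g \<in> {Gb, Gbeta}" and "x = inf_img (phi g) y" and "left_special w x" and "w \<noteq> []"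
  shows "\<exists>w'. length w' < length w \<and> left_special w' y \<and> (prefix_inf w' y \<longrightarrow> prefix_inf w x)"
proof (cases "g = Gb")
  case True
  then show ?thesis
    using assms left_special_desubst_b length_desubst_b_less by blast
next
  case False
  then have "exch \<circ> x = inf_img (phi Gb) (exch \<circ> y)"
    using assms(1,2) exch_inf_img_phi_beta by auto
  moreover have "left_special (map exch w) (exch \<circ> x)"
    using assms(3) by (simp add: left_special_exch)
  ultimately obtain w' where "length w' < length w" "left_special w' (exch \<circ> y)"
      "prefix_inf w' (exch \<circ> y) \<longrightarrow> prefix_inf (map exch w) (exch \<circ> x)"
    using left_special_desubst_b length_desubst_b_less assms(4)
    by (metis length_map Nil_is_map_conv)
  then show ?thesis
    by (intro exI[of _ "map exch w'"]) (simp add: left_special_exch prefix_inf_exch)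
qed

lemma left_special_pref_subst:
  assumes "g \<in> {Gb, Gbeta}" and "x = inf_img (phi g) y" and "left_special (pref y n) y"
  shows "left_special (pref x (Suc n)) x"
proof (cases "g = Gb")
  case True
  then show ?thesis
    using assms left_special_pref_phi_b by blast
next
  case False
  then have "exch \<circ> x = inf_img (phi Gb) (exch \<circ> y)"
    using assms(1,2) exch_inf_img_phi_beta by auto
  moreover have "left_special (pref (exch \<circ> y) n) (exch \<circ> y)"
    using assms(3) by (simp add: pref_exch left_special_exch)
  ultimately have "left_special (pref (exch \<circ> x) (Suc n)) (exch \<circ> x)"
    by (rule left_special_pref_phi_b)
  then show ?thesis
    by (simp add: pref_exch left_special_exch)
qed

context
  fixes K :: "(nat \<Rightarrow> bin) set"
  assumes desubst: "\<And>x. x \<in> K \<Longrightarrow> \<exists>y\<in>K. \<exists>g\<in>{Gb, Gbeta}. x = inf_img (phi g) y"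
    and both_letters: "\<And>x. x \<in> K \<Longrightarrow> range x = UNIV"
begin

lemma left_special_pref_desubstitutive: "x \<in> K \<Longrightarrow> left_special (pref x n) x"
proof (induction n arbitrary: x)
  case 0
  have "factor_inf [c] x" for c
  proof -
    obtain i where "x i = c"
      using both_letters[OF 0] by (metis UNIV_I rangeE)
    then have "prefix_inf [c] (drop_inf i x)"
      by (simp add: prefix_inf_def drop_inf_def)
    then show ?thesis
      unfolding factor_inf_def by blast
  qed
  then show ?case
    by (simp add: left_special_def)
next
  case (Suc n)
  then obtain y g where "y \<in> K" "g \<in> {Gb, Gbeta}" "x = inf_img (phi g) y"
    using desubst by blast
  then show ?case
    using Suc.IH left_special_pref_subst by blast
qed

lemma prefix_inf_left_special_desubstitutive: "x \<in> K \<Longrightarrow> left_special w x \<Longrightarrow> prefix_inf w x"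
proof (induction "length w" arbitrary: w x rule: less_induct)
  case less
  show ?case
  proof (cases "w = []")
    case True
    then show ?thesis by (simp add: prefix_inf_def)
  next
    case False
    obtain y g where "y \<in> K" "g \<in> {Gb, Gbeta}" "x = inf_img (phi g) y"
      using desubst less.prems(1) by blast
    then obtain w' where "length w' < length w" "left_special w' y"
        "prefix_inf w' y \<longrightarrow> prefix_inf w x"
      using left_special_desubst less.prems(2) False by blast
    then show ?thesis
      using less.hyps \<open>y \<in> K\<close> by blast
  qed
qed

lemma standard_sturmian_desubstitutive: "x \<in> K \<Longrightarrow> standard_sturmian x"
  by (intro standard_sturmianI left_special_pref_desubstitutive prefix_inf_left_special_desubstitutive)

end

lemma fixed_by_phiw_rotate:
  assumes "fixed_by (phiw (g # v)) x"
  shows "x = inf_img (phi g) (inf_img (phiw v) x)"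
    and "fixed_by (phiw (v @ [g])) (inf_img (phiw v) x)"
proof -
  have "phiw (g # v) = (\<lambda>c. ext (phi g) (phiw v c))"
    by (simp add: fun_eq_iff)
  then show x: "x = inf_img (phi g) (inf_img (phiw v) x)"
    using assms inf_img_comp[OF nonerasing_phi nonerasing_phiw] unfolding fixed_by_def by metis
  have "phiw (v @ [g]) = (\<lambda>c. ext (phiw v) (phi g c))"
    by (simp add: fun_eq_iff phiw_append)
  then show "fixed_by (phiw (v @ [g])) (inf_img (phiw v) x)"
    using x inf_img_comp[OF nonerasing_phiw nonerasing_phi] unfolding fixed_by_def by metis
qed

lemma range_fixed_point:
  assumes "moves_all_letters v" and "fixed_by (phiw v) x"
  shows "range x = UNIV"
proof -
  have "prefix_inf (phiw v (x 0)) x"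
    using prefix_inf_inf_img[OF nonerasing_phiw, of v x 1] assms(2)
    by (simp add: fixed_by_def pref_def)
  moreover have "set (phiw v (x 0)) = UNIV"
    using assms(1) set_phiw_UNIV unfolding moves_all_letters_def by blast
  ultimately show ?thesis
    unfolding prefix_inf_def by (metis UNIV_I in_set_conv_nth rangeI subsetI subset_antisym)
qed

lemma standard_sturmian_fixed_point:
  assumes "set v \<subseteq> {Gb, Gbeta}" and "moves_all_letters v" and "fixed_by (phiw v) x"
  shows "standard_sturmian x"
proof -
  define K where "K = {x. \<exists>v. set v \<subseteq> {Gb, Gbeta} \<and> moves_all_letters v \<and> fixed_by (phiw v) x}"
  have "\<exists>y\<in>K. \<exists>g\<in>{Gb, Gbeta}. x = inf_img (phi g) y" if x: "x \<in> K" for x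
  proof -
    obtain v where v: "set v \<subseteq> {Gb, Gbeta}" "moves_all_letters v" "fixed_by (phiw v) x"
      using x unfolding K_def by blast
    then obtain g v' where gv: "v = g # v'"
      unfolding moves_all_letters_def by (cases v) auto
    have "set (v' @ [g]) \<subseteq> {Gb, Gbeta}" and "moves_all_letters (v' @ [g])"
      using v(1,2) gv unfolding moves_all_letters_def by auto
    moreover have "fixed_by (phiw (v' @ [g])) (inf_img (phiw v') x)"
      using v(3) gv fixed_by_phiw_rotate(2) by blast
    ultimately have "inf_img (phiw v') x \<in> K"
      unfolding K_def by blast
    then show ?thesis
      using v gv fixed_by_phiw_rotate(1) by auto
  qed
  moreover have "range x = UNIV" if "x \<in> K" for x
    using that range_fixed_point unfolding K_def by blast
  moreover have "x \<in> K"
    using assms unfolding K_def by blast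
  ultimately show ?thesis
    by (rule standard_sturmian_desubstitutive)
qed

theorem lemma26:
  fixes u :: "nat \<Rightarrow> bin" and w :: "gen list"
  assumes prim: "primitive (phiw w)" and subst: "substitution (phiw w)"
    and fixd: "fixed_by (phiw w) u"
  shows "(set w \<subseteq> {Ga, Gbeta} \<longrightarrow>
            standard_sturmian (shift u) \<and> substitution (phiw (map H w))
            \<and> fixed_by (phiw (map H w)) (shift u))
       \<and> (set w \<subseteq> {Gb, Galpha} \<longrightarrow>
            standard_sturmian (shift u) \<and> substitution (phiw (map F w))
            \<and> fixed_by (phiw (map F w)) (shift u))
       \<and> (set w \<subseteq> {Ga, Galpha} \<and> u 0 = B1 \<longrightarrow>
            substitution (phiw (map H w)) \<and> fixed_by (phiw (map H w)) (shift u))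
       \<and> (set w \<subseteq> {Ga, Galpha} \<and> u 0 = B0 \<longrightarrow>
            substitution (phiw (map F w)) \<and> fixed_by (phiw (map F w)) (shift u))"
proof -
  have moves: "moves_all_letters w"
    using prim by (rule primitive_moves_all_letters)
  have hd_u: "hd (phiw w (u 0)) = u 0"
    using fixd by (simp add: fixed_by_hd)
  have H_case: "substitution (phiw (map H w)) \<and> fixed_by (phiw (map H w)) (shift u)"
    if "Gb \<notin> set w" and "u 0 = B1"
    using fixed_by_shift_H[OF that fixd] substitution_phiw moves moves_all_letters_map_H by blast
  have F_case: "substitution (phiw (map F w)) \<and> fixed_by (phiw (map F w)) (shift u)"
    if "Gbeta \<notin> set w" and "u 0 = B0"
    using fixed_by_shift_F[OF that fixd] substitution_phiw moves moves_all_letters_map_F by blast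
  have u0_B1: "u 0 = B1" if "set w \<subseteq> {Ga, Gbeta}"
    using hd_phiw_a_beta[OF moves that] hd_u by simp
  have u0_B0: "u 0 = B0" if "set w \<subseteq> {Gb, Galpha}"
    using hd_phiw_b_alpha[OF moves that] hd_u by simp
  have "standard_sturmian (shift u)" if "set w \<subseteq> {Ga, Gbeta}"
    by (rule standard_sturmian_fixed_point[of "map H w"])
      (use that moves H_case u0_B1 in \<open>auto simp: moves_all_letters_map_H\<close>)
  moreover have "standard_sturmian (shift u)" if "set w \<subseteq> {Gb, Galpha}"
    by (rule standard_sturmian_fixed_point[of "map F w"])
      (use that moves F_case u0_B0 in \<open>auto simp: moves_all_letters_map_F\<close>)
  ultimately show ?thesis
    using H_case F_case u0_B1 u0_B0 by blast
qed

end
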